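(* Let $(\vec X_1,Y_1),\ldots,(\vec X_n,Y_n),(\vec X_{n+1},Y_{n+1})$ be i.i.d. with $\vec X\in\mathcal X$, $Y\in\mathbb R$, and let $F(y\mid\vec x)$ be the conditional distribution function of $Y$ given $\vec X=\vec x$. For each $n$ let $\widehat F$ be an estimate of $F$ independent of $(\vec X_i,Y_i)_{i\le n+1}$. Fix $\alpha\in(0,1)$ and assume: (A1) there exist sequences $\eta_n=o(1)$ and $\rho_n=o(1)$ such that $\mathbb P\Big(\mathbb E\big[\sup_{y\in\mathbb R}(\widehat F(y\mid\vec X)-F(y\mid\vec X))^2\,\big|\,\widehat F\big]\ge\eta_n\Big)\le\rho_n$, where $(\vec X,Y)$ is an independent copy; (A2) for every $\vec x$, $F(y\mid\vec x)$ is differentiable in $y$, and there exists $M>0$ such that $\inf_{\vec x}\frac{dF(y\mid\vec x)}{dy}\ge M^{-1}$ for $y$ in a neighborhood of $F^{-1}(\alpha/2\mid\vec x)$ and of $F^{-1}(1-\alpha/2\mid\vec x)$. Let $U_i=\widehat F(Y_i\mid\vec X_i)$, $i=1,\ldots,n$, and let $U_{[\beta]}$ denote the empirical $\beta$ quantile of $U_1,\ldots,U_n$. Then $$\widehat F^{-1}(U_{[\alpha/2]}\mid\vec X_{n+1})=F^{-1}(\alpha/2\mid\vec X_{n+1})+o_{\mathbb P}(1),\qquad \widehat F^{-1}(U_{[1-\alpha/2]}\mid\vec X_{n+1})=F^{-1}(1-\alpha/2\mid\vec X_{n+1})+o_{\mathbb P}(1).$$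
   Context: $F^{-1}(\cdot\mid\vec x)$ and $\widehat F^{-1}(\cdot\mid\vec x)$ denote the (generalized) inverses in $y$ of the conditional distribution functions. *)

theory Defs
  imports "HOL-Probability.Probability"
begin

definition is_cdf :: "(real \<Rightarrow> real) \<Rightarrow> bool" where
  "is_cdf G \<longleftrightarrow> mono G \<and> (\<forall>y. continuous (at_right y) G) \<and>
     (G \<longlongrightarrow> 0) at_bot \<and> (G \<longlongrightarrow> 1) at_top"

definition geninv :: "(real \<Rightarrow> real) \<Rightarrow> real \<Rightarrow> real" where
  "geninv G u = Inf {y. u \<le> G y}"

definition emp_quantile :: "(nat \<Rightarrow> real) \<Rightarrow> nat \<Rightarrow> real \<Rightarrow> real" where
  "emp_quantile u n \<beta> = Inf {t. \<beta> \<le> real (card {i. i < n \<and> u i \<le> t}) / real n}"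

text \<open>Outer probability (so that o_P statements make sense without measurability).\<close>
definition outer_prob :: "'a measure \<Rightarrow> 'a set \<Rightarrow> real" where
  "outer_prob M A = Inf {measure M B | B. B \<in> sets M \<and> A \<subseteq> B}"

end

theory Submission
  imports Defs
begin

text \<open>Write \<open>F\<^sub>x\<close> for \<open>F (\<cdot> | x)\<close> and \<open>G\<^sub>x\<close> for its estimate. Conditionally on the estimate,
  Markov's inequality turns (A1) into: with probability tending to one, \<open>sup |G\<^sub>x - F\<^sub>x|\<close> is small
  at the test point and at all but a small fraction of the calibration points. By the probability
  integral transform, \<open>Y\<^sub>i \<le> F\<^sub>X\<^sub>i\<^sup>-\<^sup>1(a)\<close> has probability exactly \<open>a\<close>, so Hoeffding's inequality
  keeps the empirical distribution of the scores \<open>F\<^sub>X\<^sub>i(Y\<^sub>i)\<close> uniformly close to the identity near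
  \<open>\<beta>\<close>; with the previous point this pins the empirical \<open>\<beta>\<close>-quantile of \<open>U\<^sub>i = G\<^sub>X\<^sub>i(Y\<^sub>i)\<close> near \<open>\<beta>\<close>.
  Finally the slope bound (A2) makes \<open>F\<^sub>x\<^sup>-\<^sup>1(\<beta>)\<close> stable: if \<open>sup |G\<^sub>x - F\<^sub>x| \<le> d\<close> and
  \<open>|u - \<beta>| \<le> s\<close> with \<open>d + s < e/K\<close>, then \<open>|G\<^sub>x\<^sup>-\<^sup>1(u) - F\<^sub>x\<^sup>-\<^sup>1(\<beta>)| \<le> e\<close>.\<close>

section \<open>Distribution functions and their generalized inverses\<close>

lemma is_cdf_nonneg:
  assumes "is_cdf F" shows "0 \<le> F y"
proof (rule tendsto_upperbound)
  show "(F \<longlongrightarrow> 0) at_bot" using assms by (simp add: is_cdf_def)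
  show "\<forall>\<^sub>F z in at_bot. F z \<le> F y"
    using assms by (auto simp: is_cdf_def eventually_at_bot_linorder mono_def)
qed simp

lemma is_cdf_le_1:
  assumes "is_cdf F" shows "F y \<le> 1"
proof (rule tendsto_lowerbound)
  show "(F \<longlongrightarrow> 1) at_top" using assms by (simp add: is_cdf_def)
  show "\<forall>\<^sub>F z in at_top. F y \<le> F z"
    using assms by (auto simp: is_cdf_def eventually_at_top_linorder mono_def)
qed simp

lemma geninv_le_iff:
  assumes F: "is_cdf F" and u: "0 < u" "u < 1"
  shows "geninv F u \<le> y \<longleftrightarrow> u \<le> F y"
proof -
  have m: "mono F" and rc: "\<And>y. continuous (at_right y) F"
    and l0: "(F \<longlongrightarrow> 0) at_bot" and l1: "(F \<longlongrightarrow> 1) at_top" using F by (auto simp: is_cdf_def)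
  define S where "S = {y. u \<le> F y}"
  have up: "y' \<in> S" if "y \<in> S" "y \<le> y'" for y y'
    using m that by (auto simp: S_def mono_def intro: order_trans)
  have "\<forall>\<^sub>F z in at_top. u < F z" using l1 u by (auto intro: order_tendstoD)
  then obtain N where "\<And>z. N \<le> z \<Longrightarrow> u < F z" by (auto simp: eventually_at_top_linorder)
  then have "N \<in> S" by (simp add: S_def less_imp_le)
  then have ne: "S \<noteq> {}" by blast
  have "\<forall>\<^sub>F z in at_bot. F z < u" using l0 u by (auto intro: order_tendstoD)
  then obtain b where b: "\<And>z. z \<le> b \<Longrightarrow> F z < u" by (auto simp: eventually_at_bot_linorder)
  have bdd: "bdd_below S"
  proof (rule bdd_belowI)
    fix y assume "y \<in> S" then show "b \<le> y" using b[of y] by (cases "y \<le> b") (auto simp: S_def)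
  qed
  have "u \<le> F (Inf S)"
  proof (rule tendsto_lowerbound)
    show "(F \<longlongrightarrow> F (Inf S)) (at_right (Inf S))" using rc[of "Inf S"] by (simp add: continuous_within)
    have "u \<le> F y" if "Inf S < y" for y
    proof -
      obtain s where "s \<in> S" "s < y" using cInf_lessD[OF ne \<open>Inf S < y\<close>] by blast
      then show ?thesis using up[of s y] by (simp add: S_def)
    qed
    then show "\<forall>\<^sub>F y in at_right (Inf S). u \<le> F y"
      by (auto simp: eventually_at_right_less eventually_at_filter)
  qed simp
  then have "Inf S \<in> S" by (simp add: S_def)
  then have "Inf S \<le> y \<longleftrightarrow> y \<in> S" using up[of "Inf S" y] cInf_lower[OF _ bdd, of y] by blast
  then show ?thesis by (simp add: geninv_def S_def)
qed

lemma cdf_geninv_eq: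
  assumes F: "is_cdf F" and u: "0 < u" "u < 1" and cont: "isCont F (geninv F u)"
  shows "F (geninv F u) = u"
proof (rule antisym)
  let ?q = "geninv F u"
  show "F ?q \<le> u"
  proof (rule tendsto_upperbound)
    show "(F \<longlongrightarrow> F ?q) (at_left ?q)" using cont by (simp add: isCont_def filterlim_at_split)
    have "F y \<le> u" if "y < ?q" for y using that geninv_le_iff[OF F u, of y] by auto
    then show "\<forall>\<^sub>F y in at_left ?q. F y \<le> u" by (auto simp: eventually_at_filter)
  qed simp
  show "u \<le> F ?q" using geninv_le_iff[OF F u, of ?q] by simp
qed

lemma increments_ge_of_deriv_ge:
  fixes F :: "real \<Rightarrow> real"
  assumes dif: "\<forall>y. F differentiable (at y)" and slope: "\<forall>y. \<bar>y - q\<bar> < \<delta> \<longrightarrow> c \<le> deriv F y"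
    and e: "0 < e" "e < \<delta>"
  shows "e * c \<le> F (q + e) - F q" "e * c \<le> F q - F (q - e)"
proof -
  have D: "\<And>x. DERIV F x :> deriv F x" using dif DERIV_deriv_iff_real_differentiable by blast
  obtain z where "q < z" "z < q + e" "F (q + e) - F q = (q + e - q) * deriv F z"
    using MVT2[of q "q + e" F "deriv F"] D e by auto
  then show "e * c \<le> F (q + e) - F q" using slope e by (auto intro!: mult_left_mono)
  obtain z where "q - e < z" "z < q" "F q - F (q - e) = (q - (q - e)) * deriv F z"
    using MVT2[of "q - e" q F "deriv F"] D e by auto
  then show "e * c \<le> F q - F (q - e)" using slope e by (auto intro!: mult_left_mono)
qed

lemma geninv_perturb:
  assumes F: "is_cdf F" and G: "is_cdf G" and dif: "\<forall>y. F differentiable (at y)"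
    and slope: "\<forall>y. \<bar>y - geninv F \<beta>\<bar> < \<delta> \<longrightarrow> 1 / K \<le> deriv F y"
    and \<beta>: "0 < \<beta>" "\<beta> < 1" and u: "0 < u" "u < 1" and e: "0 < e" "e < \<delta>"
    and close: "\<forall>y. \<bar>G y - F y\<bar> \<le> d" and u_\<beta>: "\<bar>u - \<beta>\<bar> \<le> s" and small: "d + s < e / K"
  shows "\<bar>geninv G u - geninv F \<beta>\<bar> \<le> e"
proof -
  define q where "q = geninv F \<beta>"
  have "isCont F q" using dif differentiable_imp_continuous_within by blast
  then have Fq: "F q = \<beta>" using cdf_geninv_eq[OF F \<beta>] by (simp add: q_def)
  have "e * (1 / K) \<le> F (q + e) - F q" "e * (1 / K) \<le> F q - F (q - e)"
    using increments_ge_of_deriv_ge[OF dif _ e, of q "1 / K"] slope by (simp_all add: q_def)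
  then have "u \<le> G (q + e)" "\<not> u \<le> G (q - e)"
    using close[rule_format, of "q + e"] close[rule_format, of "q - e"] Fq u_\<beta> small by auto
  then have "geninv G u \<le> q + e" "\<not> geninv G u \<le> q - e" using geninv_le_iff[OF G u] by simp_all
  then show ?thesis by (simp add: q_def)
qed

section \<open>Empirical quantiles\<close>

lemma card_filter_lessThan_le_add:
  fixes n :: nat
  assumes "\<And>i. i < n \<Longrightarrow> P i \<Longrightarrow> Q i \<or> R i"
  shows "real (card {i. i < n \<and> P i}) \<le> real (card {i. i < n \<and> Q i}) + real (card {i. i < n \<and> R i})"
proof -
  have "card {i. i < n \<and> P i} \<le> card ({i. i < n \<and> Q i} \<union> {i. i < n \<and> R i})"
    by (rule card_mono) (use assms in auto)
  also have "\<dots> \<le> card {i. i < n \<and> Q i} + card {i. i < n \<and> R i}" by (rule card_Un_le)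
  finally show ?thesis by linarith
qed

lemma card_filter_lessThan_mono:
  fixes n :: nat
  assumes "\<And>i. i < n \<Longrightarrow> P i \<Longrightarrow> Q i"
  shows "real (card {i. i < n \<and> P i}) \<le> real (card {i. i < n \<and> Q i})"
  using card_mono[of "{i. i < n \<and> Q i}" "{i. i < n \<and> P i}"] assms by auto

lemma card_filter_lessThan_eq_sum:
  fixes n :: nat
  shows "real (card {i. i < n \<and> P i}) = (\<Sum>i<n. of_bool (P i))"
  by (simp add: lessThan_def Collect_conj_eq)

lemma emp_quantile_le:
  assumes \<beta>: "0 < \<beta>" and t: "\<beta> \<le> real (card {i. i < n \<and> U i \<le> t}) / real n"
  shows "emp_quantile U n \<beta> \<le> t"
  unfolding emp_quantile_def
proof (rule cInf_lower)
  show "t \<in> {t. \<beta> \<le> real (card {i. i < n \<and> U i \<le> t}) / real n}" using t by simp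
  show "bdd_below {t. \<beta> \<le> real (card {i. i < n \<and> U i \<le> t}) / real n}"
  proof (rule bdd_belowI[of _ "Min (U ` {..<n})"])
    fix t' assume "t' \<in> {t. \<beta> \<le> real (card {i. i < n \<and> U i \<le> t}) / real n}"
    then have "{i. i < n \<and> U i \<le> t'} \<noteq> {}" using \<beta> by (intro notI) simp
    then obtain i where "i < n" "U i \<le> t'" by blast
    then show "Min (U ` {..<n}) \<le> t'" by (meson Min_le finite_imageI finite_lessThan imageI lessThan_iff order_trans)
  qed
qed

lemma emp_quantile_ge:
  assumes t: "\<beta> \<le> real (card {i. i < n \<and> U i \<le> t}) / real n"
    and below: "\<And>t. t < t\<^sub>0 \<Longrightarrow> real (card {i. i < n \<and> U i \<le> t}) / real n < \<beta>"
  shows "t\<^sub>0 \<le> emp_quantile U n \<beta>"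
  unfolding emp_quantile_def
  by (rule cInf_greatest) (use t below in \<open>force simp: not_less[symmetric]\<close>)+

lemma emp_quantile_perturb:
  fixes U V :: "nat \<Rightarrow> real" and bad :: "nat \<Rightarrow> bool"
  assumes n: "n > 0" and s: "s > 0" and \<beta>: "\<beta> > 0"
    and close: "\<And>i. i < n \<Longrightarrow> \<not> bad i \<Longrightarrow> \<bar>U i - V i\<bar> < s / 2"
    and few_bad: "real (card {i. i < n \<and> bad i}) < real n * s / 8"
    and upper: "real n * (\<beta> + s / 4) < real (card {i. i < n \<and> V i \<le> \<beta> + s / 2})"
    and lower: "real (card {i. i < n \<and> V i < \<beta> - s / 4}) < real n * (\<beta> - s / 8)"
  shows "\<bar>emp_quantile U n \<beta> - \<beta>\<bar> \<le> s"
proof -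
  have "real (card {i. i < n \<and> V i \<le> \<beta> + s / 2})
      \<le> real (card {i. i < n \<and> U i \<le> \<beta> + s}) + real (card {i. i < n \<and> bad i})"
  proof (rule card_filter_lessThan_le_add)
    fix i assume i: "i < n" "V i \<le> \<beta> + s / 2"
    show "U i \<le> \<beta> + s \<or> bad i"
    proof (cases "bad i")
      case False then show ?thesis using close[OF i(1) False] i(2) by linarith
    qed simp
  qed
  then have hi: "\<beta> \<le> real (card {i. i < n \<and> U i \<le> \<beta> + s}) / real n"
    using upper few_bad n s by (simp add: pos_le_divide_eq algebra_simps)
  have lo: "real (card {i. i < n \<and> U i \<le> t}) / real n < \<beta>" if "t < \<beta> - s" for t
  proof -
    have "real (card {i. i < n \<and> U i \<le> t})
        \<le> real (card {i. i < n \<and> V i < \<beta> - s / 4}) + real (card {i. i < n \<and> bad i})"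
    proof (rule card_filter_lessThan_le_add)
      fix i assume i: "i < n" "U i \<le> t"
      show "V i < \<beta> - s / 4 \<or> bad i"
      proof (cases "bad i")
        case False then show ?thesis using close[OF i(1) False] i(2) that s by linarith
      qed simp
    qed
    then show ?thesis using lower few_bad n by (simp add: pos_divide_less_eq algebra_simps)
  qed
  show ?thesis using emp_quantile_le[OF \<beta> hi] emp_quantile_ge[where t\<^sub>0 = "\<beta> - s", OF hi lo] by auto
qed

lemma borel_measurable_card_filter_lessThan:
  fixes n :: nat
  assumes "\<And>i. {\<omega>\<in>space M. P i \<omega>} \<in> sets M"
  shows "(\<lambda>\<omega>. real (card {i. i < n \<and> P i \<omega>})) \<in> borel_measurable M"
proof (rule measurable_cong[THEN iffD1])
  show "(\<lambda>\<omega>. \<Sum>i<n. indicator {\<omega>\<in>space M. P i \<omega>} \<omega> :: real) \<in> borel_measurable M"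
    using assms by measurable
  show "(\<Sum>i<n. indicator {\<omega>\<in>space M. P i \<omega>} \<omega>) = real (card {i. i < n \<and> P i \<omega>})"
    if "\<omega> \<in> space M" for \<omega>
    by (subst card_filter_lessThan_eq_sum) (simp add: indicator_def that)
qed

lemma outer_prob_le_measure:
  assumes "finite_measure M" "B \<in> sets M" "A \<subseteq> B"
  shows "outer_prob M A \<le> measure M B"
  unfolding outer_prob_def
  by (rule cInf_lower) (use assms in \<open>auto intro!: bdd_belowI[of _ 0]\<close>)

lemma outer_prob_nonneg: "A \<subseteq> space M \<Longrightarrow> 0 \<le> outer_prob M A"
  unfolding outer_prob_def by (rule cInf_greatest) auto

lemma outer_prob_eq_measure:
  assumes "finite_measure M" "A \<in> sets M"
  shows "outer_prob M A = measure M A"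
proof (rule antisym)
  show "outer_prob M A \<le> measure M A" by (rule outer_prob_le_measure) (use assms in auto)
  show "measure M A \<le> outer_prob M A"
    unfolding outer_prob_def
    by (rule cInf_greatest) (use assms in \<open>auto intro: finite_measure.finite_measure_mono\<close>)
qed

lemma SUP_ennreal_eq_SUP_Rats:
  fixes f :: "real \<Rightarrow> real"
  assumes rc: "\<And>y. continuous (at_right y) f"
  shows "(SUP y. ennreal (f y)) = (SUP q\<in>\<rat>. ennreal (f q))"
proof (rule antisym)
  show "(SUP q\<in>\<rat>. ennreal (f q)) \<le> (SUP y. ennreal (f y))" by (rule SUP_subset_mono) auto
  show "(SUP y. ennreal (f y)) \<le> (SUP q\<in>\<rat>. ennreal (f q))"
  proof (rule SUP_least)
    fix y
    have "\<forall>k. \<exists>r\<in>\<rat>. y < r \<and> r < y + 1 / (real k + 1)"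
      by (intro allI Rats_dense_in_real) (simp add: add_pos_pos)
    then obtain r where r: "\<And>k. r k \<in> \<rat>" "\<And>k. y < r k" "\<And>k. r k < y + 1 / (real k + 1)"
      by metis
    have "r \<longlonglongrightarrow> y"
    proof (rule tendsto_sandwich[of "\<lambda>_. y" _ _ "\<lambda>k. y + 1 / (real k + 1)"])
      show "(\<lambda>k. y + 1 / (real k + 1)) \<longlonglongrightarrow> y"
        using LIMSEQ_inverse_real_of_nat_add[of y] by (simp add: inverse_eq_divide add.commute)
    qed (use r in \<open>auto intro!: always_eventually less_imp_le\<close>)
    then have "filterlim r (at_right y) sequentially"
      using r(2) by (auto simp: filterlim_at intro!: always_eventually)
    then have "(\<lambda>k. f (r k)) \<longlonglongrightarrow> f y"
      using rc[of y] by (auto simp: continuous_within intro: filterlim_compose)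
    then have "(\<lambda>k. ennreal (f (r k))) \<longlonglongrightarrow> ennreal (f y)" by (rule tendsto_ennrealI)
    then show "ennreal (f y) \<le> (SUP q\<in>\<rat>. ennreal (f q))"
      by (rule LIMSEQ_le_const2) (use r(1) in \<open>auto intro!: SUP_upper\<close>)
  qed
qed

section \<open>The probability integral transform\<close>

lemma sum_indicator_level_sets:
  fixes h :: "'x \<Rightarrow> 'b" and f :: "'b \<Rightarrow> real"
  assumes "x \<in> S" "finite (h ` S)"
  shows "(\<Sum>c\<in>h ` S. indicator (h -` {c} \<inter> S) x * f c) = f (h x)"
proof -
  have "(\<Sum>c\<in>h ` S. indicator (h -` {c} \<inter> S) x * f c) = (\<Sum>c\<in>h ` S. if c = h x then f c else 0)"
    by (rule sum.cong) (use assms in \<open>auto simp: indicator_def\<close>)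
  also have "\<dots> = f (h x)" using assms by (simp add: sum.delta)
  finally show ?thesis .
qed

lemma measurable_finite_range_comp:
  fixes h :: "'x \<Rightarrow> real" and F :: "'x \<Rightarrow> real \<Rightarrow> real"
  assumes F[measurable]: "\<And>y. (\<lambda>x. F x y) \<in> borel_measurable SX"
    and h: "h \<in> borel_measurable SX" and fin: "finite (h ` space SX)"
  shows "(\<lambda>x. F x (h x)) \<in> borel_measurable SX"
proof (rule measurable_cong[THEN iffD1])
  have [measurable]: "h -` {c} \<inter> space SX \<in> sets SX" for c
    by (rule measurable_sets[OF h]) (rule borel_closed, simp)
  show "(\<lambda>x. \<Sum>c\<in>h ` space SX. indicator (h -` {c} \<inter> space SX) x * F x c) \<in> borel_measurable SX"
    by measurable
  show "(\<Sum>c\<in>h ` space SX. indicator (h -` {c} \<inter> space SX) x * F x c) = F x (h x)"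
    if "x \<in> space SX" for x
    using sum_indicator_level_sets[OF that fin] .
qed

lemma prob_le_finite_range_comp:
  fixes h :: "'x \<Rightarrow> real" and Y0 :: "'a \<Rightarrow> real" and F :: "'x \<Rightarrow> real \<Rightarrow> real"
  assumes M: "prob_space M" and X0[measurable]: "X0 \<in> measurable M SX"
    and Y0[measurable]: "Y0 \<in> borel_measurable M"
    and F_bounded: "\<forall>x\<in>space SX. \<forall>y. 0 \<le> F x y \<and> F x y \<le> 1"
    and F_meas[measurable]: "\<And>y. (\<lambda>x. F x y) \<in> borel_measurable SX"
    and F_cond: "\<forall>A\<in>sets SX. \<forall>y. measure M {\<omega>\<in>space M. X0 \<omega> \<in> A \<and> Y0 \<omega> \<le> y}
                   = (LINT x:A|distr M SX X0. F x y)"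
    and h[measurable]: "h \<in> borel_measurable SX" and fin: "finite (h ` space SX)"
  shows "measure M {\<omega>\<in>space M. Y0 \<omega> \<le> h (X0 \<omega>)} = (\<integral>x. F x (h x) \<partial>distr M SX X0)"
proof -
  interpret prob_space M by fact
  define PX where "PX = distr M SX X0"
  interpret PX: prob_space PX unfolding PX_def by (rule prob_space_distr) simp
  have [simp]: "space PX = space SX" and [simp, measurable_cong]: "sets PX = sets SX"
    by (simp_all add: PX_def)
  define A where "A c = h -` {c} \<inter> space SX" for c
  have A[measurable]: "A c \<in> sets SX" for c
    unfolding A_def by (rule measurable_sets[OF h]) (rule borel_closed, simp)
  define E where "E c = {\<omega>\<in>space M. X0 \<omega> \<in> A c \<and> Y0 \<omega> \<le> c}" for c
  have E: "E c \<in> sets M" for c unfolding E_def by measurable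
  have level_sets: "{\<omega>\<in>space M. Y0 \<omega> \<le> h (X0 \<omega>)} = (\<Union>c\<in>h ` space SX. E c)"
    using measurable_space[OF X0] by (auto simp: E_def A_def)
  have "measure M {\<omega>\<in>space M. Y0 \<omega> \<le> h (X0 \<omega>)} = (\<Sum>c\<in>h ` space SX. measure M (E c))"
    unfolding level_sets
  proof (rule finite_measure_finite_Union)
    show "E ` h ` space SX \<subseteq> sets M" using E by auto
    show "disjoint_family_on E (h ` space SX)" by (auto simp: disjoint_family_on_def E_def A_def)
  qed (rule fin)
  also have "\<dots> = (\<Sum>c\<in>h ` space SX. \<integral>x. indicator (A c) x * F x c \<partial>PX)"
    by (intro sum.cong refl) (simp add: E_def F_cond[rule_format, OF A] PX_def set_lebesgue_integral_def)
  also have "\<dots> = (\<integral>x. (\<Sum>c\<in>h ` space SX. indicator (A c) x * F x c) \<partial>PX)"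
  proof (rule Bochner_Integration.integral_sum[symmetric])
    show "integrable PX (\<lambda>x. indicator (A c) x * F x c)" for c
      by (rule PX.integrable_const_bound[where B=1]) (use F_bounded in \<open>auto simp: indicator_def\<close>)
  qed
  also have "\<dots> = (\<integral>x. F x (h x) \<partial>PX)"
    unfolding A_def by (intro Bochner_Integration.integral_cong refl sum_indicator_level_sets fin) simp
  finally show ?thesis by (simp add: PX_def)
qed

lemma dyadic_floor_bounds:
  fixes x :: real
  shows "x < (real_of_int \<lfloor>2 ^ m * x\<rfloor> + 1) / 2 ^ m"
    and "(real_of_int \<lfloor>2 ^ m * x\<rfloor> + 1) / 2 ^ m \<le> x + (1 / 2) ^ m"
proof -
  have "2 ^ m * x < real_of_int \<lfloor>2 ^ m * x\<rfloor> + 1" "real_of_int \<lfloor>2 ^ m * x\<rfloor> \<le> 2 ^ m * x"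
    by (rule real_of_int_floor_add_one_gt, rule of_int_floor_le)
  then show "x < (real_of_int \<lfloor>2 ^ m * x\<rfloor> + 1) / 2 ^ m"
    "(real_of_int \<lfloor>2 ^ m * x\<rfloor> + 1) / 2 ^ m \<le> x + (1 / 2) ^ m"
    by (simp_all add: pos_less_divide_eq pos_divide_le_eq power_divide distrib_left mult.commute)
qed

lemma finite_range_approx_from_above:
  fixes h :: "'x \<Rightarrow> real"
  assumes h[measurable]: "h \<in> borel_measurable SX"
  obtains hm :: "nat \<Rightarrow> 'x \<Rightarrow> real"
  where "\<And>m. hm m \<in> borel_measurable SX" "\<And>m. finite (hm m ` space SX)"
    "\<And>x. (\<lambda>m. hm m x) \<longlonglongrightarrow> h x" "\<And>x. \<forall>\<^sub>F m in sequentially. h x < hm m x"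
proof
  define clip where "clip m k = max (- (int m * 2 ^ m)) (min (int m * 2 ^ m) k)" for m and k :: int
  define hm where "hm m x = real_of_int (clip m (\<lfloor>2 ^ m * h x\<rfloor> + 1)) / 2 ^ m" for m x
  show "hm m \<in> borel_measurable SX" for m
  proof -
    have "(\<lambda>x. \<lfloor>2 ^ m * h x\<rfloor>) \<in> measurable SX (count_space UNIV)"
      by (rule measurable_compose[OF _ measurable_real_floor]) simp
    from measurable_compose[OF this, of "\<lambda>k. real_of_int (clip m (k + 1)) / 2 ^ m" borel]
    show ?thesis by (simp add: hm_def[abs_def])
  qed
  show "finite (hm m ` space SX)" for m
  proof (rule finite_subset)
    show "hm m ` space SX \<subseteq> (\<lambda>k. real_of_int k / 2 ^ m) ` {- (int m * 2 ^ m)..int m * 2 ^ m}"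
      by (auto simp: hm_def clip_def)
  qed simp
  have unclipped: "hm m x = (real_of_int \<lfloor>2 ^ m * h x\<rfloor> + 1) / 2 ^ m" if "\<bar>h x\<bar> < real m" for m x
  proof -
    have "- (real m * 2 ^ m) < 2 ^ m * h x" "2 ^ m * h x < real m * 2 ^ m"
      using that mult_strict_right_mono[of "- h x" "real m" "2 ^ m"]
        mult_strict_right_mono[of "h x" "real m" "2 ^ m"]
      by (auto simp: mult.commute abs_less_iff)
    then have "- (int m * 2 ^ m) \<le> \<lfloor>2 ^ m * h x\<rfloor>" "\<lfloor>2 ^ m * h x\<rfloor> < int m * 2 ^ m"
      by (simp_all add: le_floor_iff floor_less_iff)
    then show ?thesis unfolding hm_def clip_def by simp
  qed
  have bounds: "\<forall>\<^sub>F m in sequentially. h x < hm m x \<and> hm m x \<le> h x + (1 / 2) ^ m" for x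
  proof -
    obtain N :: nat where "\<bar>h x\<bar> < real N" using reals_Archimedean2 by blast
    then have "\<bar>h x\<bar> < real m" if "N \<le> m" for m using that by (meson order_less_le_trans of_nat_mono)
    then show ?thesis
      unfolding eventually_sequentially
      by (intro exI[of _ N] allI impI) (simp add: unclipped dyadic_floor_bounds)
  qed
  show "\<forall>\<^sub>F m in sequentially. h x < hm m x" for x using bounds[of x] by (rule eventually_mono) simp
  show "(\<lambda>m. hm m x) \<longlonglongrightarrow> h x" for x
  proof (rule tendsto_sandwich[OF _ _ tendsto_const])
    show "(\<lambda>m. h x + (1 / 2) ^ m) \<longlonglongrightarrow> h x"
      using tendsto_add[OF tendsto_const LIMSEQ_realpow_zero[of "1 / 2 :: real"]] by simp
  qed (use bounds[of x] in \<open>auto elim: eventually_mono\<close>)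
qed

lemma (in finite_measure) measure_le_tendsto_from_above:
  fixes U V :: "'a \<Rightarrow> real" and Vm :: "nat \<Rightarrow> 'a \<Rightarrow> real"
  assumes [measurable]: "U \<in> borel_measurable M" "V \<in> borel_measurable M" "\<And>m. Vm m \<in> borel_measurable M"
    and lim: "\<And>\<omega>. (\<lambda>m. Vm m \<omega>) \<longlonglongrightarrow> V \<omega>" and above: "\<And>\<omega>. \<forall>\<^sub>F m in sequentially. V \<omega> \<le> Vm m \<omega>"
  shows "(\<lambda>m. measure M {\<omega>\<in>space M. U \<omega> \<le> Vm m \<omega>}) \<longlonglongrightarrow> measure M {\<omega>\<in>space M. U \<omega> \<le> V \<omega>}"
proof -
  have "(\<lambda>m. indicator {\<omega>\<in>space M. U \<omega> \<le> Vm m \<omega>} \<omega>)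
      \<longlonglongrightarrow> (indicator {\<omega>\<in>space M. U \<omega> \<le> V \<omega>} \<omega> :: real)" if \<omega>: "\<omega> \<in> space M" for \<omega>
  proof (cases "U \<omega> \<le> V \<omega>")
    case True
    have "\<forall>\<^sub>F m in sequentially. U \<omega> \<le> Vm m \<omega>"
      using above[of \<omega>] by eventually_elim (use True in auto)
    then show ?thesis by (rule tendsto_eventually[OF eventually_mono]) (use True \<omega> in auto)
  next
    case False
    then have "\<forall>\<^sub>F m in sequentially. Vm m \<omega> < U \<omega>" using lim[of \<omega>] by (auto intro: order_tendstoD)
    then show ?thesis by (rule tendsto_eventually[OF eventually_mono]) (use False \<omega> in auto)
  qed
  then have "(\<lambda>m. \<integral>\<omega>. indicator {\<omega>\<in>space M. U \<omega> \<le> Vm m \<omega>} \<omega> \<partial>M)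
      \<longlonglongrightarrow> (\<integral>\<omega>. indicator {\<omega>\<in>space M. U \<omega> \<le> V \<omega>} \<omega> \<partial>M :: real)"
    by (intro integral_dominated_convergence[where w="\<lambda>_. 1"]) (auto simp: indicator_def)
  then show ?thesis by (simp add: Int_absorb2[OF Collect_restrict])
qed

text \<open>Approximating \<open>h\<close> strictly from above is what lets right-continuity of \<open>F\<close> suffice.\<close>

lemma prob_le_comp_eq_integral:
  fixes h :: "'x \<Rightarrow> real" and Y0 :: "'a \<Rightarrow> real" and F :: "'x \<Rightarrow> real \<Rightarrow> real"
  assumes M: "prob_space M" and X0[measurable]: "X0 \<in> measurable M SX"
    and Y0[measurable]: "Y0 \<in> borel_measurable M"
    and F_bounded: "\<forall>x\<in>space SX. \<forall>y. 0 \<le> F x y \<and> F x y \<le> 1"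
    and F_meas[measurable]: "\<And>y. (\<lambda>x. F x y) \<in> borel_measurable SX"
    and F_cond: "\<forall>A\<in>sets SX. \<forall>y. measure M {\<omega>\<in>space M. X0 \<omega> \<in> A \<and> Y0 \<omega> \<le> y}
                   = (LINT x:A|distr M SX X0. F x y)"
    and F_rcont: "\<forall>x\<in>space SX. \<forall>y. continuous (at_right y) (F x)"
    and h[measurable]: "h \<in> borel_measurable SX"
  shows "measure M {\<omega>\<in>space M. Y0 \<omega> \<le> h (X0 \<omega>)} = (\<integral>x. F x (h x) \<partial>distr M SX X0)"
proof -
  interpret prob_space M by fact
  define PX where "PX = distr M SX X0"
  interpret PX: prob_space PX unfolding PX_def by (rule prob_space_distr) simp
  have [simp]: "space PX = space SX" and [simp, measurable_cong]: "sets PX = sets SX"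
    by (simp_all add: PX_def)
  obtain hm where hm_meas[measurable]: "\<And>m. hm m \<in> borel_measurable SX"
    and hm_fin: "\<And>m. finite (hm m ` space SX)" and hm_lim: "\<And>x. (\<lambda>m. hm m x) \<longlonglongrightarrow> h x"
    and hm_above: "\<And>x. \<forall>\<^sub>F m in sequentially. h x < hm m x"
    using finite_range_approx_from_above[OF h] by blast
  have [measurable]: "(\<lambda>x. F x (hm m x)) \<in> borel_measurable SX" for m
    by (rule measurable_finite_range_comp[OF F_meas hm_meas hm_fin])
  have F_lim: "(\<lambda>m. F x (hm m x)) \<longlonglongrightarrow> F x (h x)" if "x \<in> space SX" for x
  proof -
    have "filterlim (\<lambda>m. hm m x) (at_right (h x)) sequentially"
      using hm_lim[of x] hm_above[of x] by (auto simp: filterlim_at elim: eventually_mono)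
    moreover have "(F x \<longlongrightarrow> F x (h x)) (at_right (h x))"
      using F_rcont that by (simp add: continuous_within)
    ultimately show ?thesis by (rule filterlim_compose[rotated])
  qed
  have [measurable]: "(\<lambda>x. F x (h x)) \<in> borel_measurable SX"
    by (rule borel_measurable_LIMSEQ_real[OF F_lim]) measurable
  have "(\<lambda>m. \<integral>x. F x (hm m x) \<partial>PX) \<longlonglongrightarrow> (\<integral>x. F x (h x) \<partial>PX)"
    by (rule integral_dominated_convergence[where w="\<lambda>_. 1"]) (use F_lim F_bounded in auto)
  moreover have "(\<lambda>m. measure M {\<omega>\<in>space M. Y0 \<omega> \<le> hm m (X0 \<omega>)})
      \<longlonglongrightarrow> measure M {\<omega>\<in>space M. Y0 \<omega> \<le> h (X0 \<omega>)}"
  proof (rule measure_le_tendsto_from_above)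
    show "(\<lambda>m. hm m (X0 \<omega>)) \<longlonglongrightarrow> h (X0 \<omega>)" for \<omega> by (rule hm_lim)
    show "\<forall>\<^sub>F m in sequentially. h (X0 \<omega>) \<le> hm m (X0 \<omega>)" for \<omega>
      using hm_above[of "X0 \<omega>"] by (rule eventually_mono) simp
  qed measurable
  moreover have "measure M {\<omega>\<in>space M. Y0 \<omega> \<le> hm m (X0 \<omega>)} = (\<integral>x. F x (hm m x) \<partial>PX)" for m
    unfolding PX_def
    by (rule prob_le_finite_range_comp[OF M X0 Y0 F_bounded F_meas F_cond hm_meas hm_fin])
  ultimately show ?thesis using LIMSEQ_unique by (simp add: PX_def)
qed

section \<open>Tail bounds\<close>

lemma measure_pair_large_slice_le:
  fixes D :: "'s \<times> 'x \<Rightarrow> ennreal"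
  assumes P: "prob_space P" and Q: "prob_space Q"
    and D[measurable]: "D \<in> borel_measurable (P \<Otimes>\<^sub>M Q)" and c: "c > 0" and \<eta>: "\<eta> \<ge> 0"
  shows "measure (P \<Otimes>\<^sub>M Q)
           {p\<in>space (P \<Otimes>\<^sub>M Q). ennreal c \<le> D p \<and> (\<integral>\<^sup>+y. D (fst p, y) \<partial>Q) < ennreal \<eta>} \<le> \<eta> / c"
proof -
  interpret P: prob_space P by fact
  interpret Q: prob_space Q by fact
  define B where "B = {p\<in>space (P \<Otimes>\<^sub>M Q). ennreal c \<le> D p \<and> (\<integral>\<^sup>+y. D (fst p, y) \<partial>Q) < ennreal \<eta>}"
  have [measurable]: "(\<lambda>\<theta>. \<integral>\<^sup>+y. D (\<theta>, y) \<partial>Q) \<in> borel_measurable P"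
    by (rule Q.borel_measurable_nn_integral_fst[OF D])
  have B: "B \<in> sets (P \<Otimes>\<^sub>M Q)" unfolding B_def by measurable
  have slice: "emeasure Q (Pair \<theta> -` B) \<le> ennreal (\<eta> / c)" for \<theta>
  proof (cases "(\<integral>\<^sup>+y. D (\<theta>, y) \<partial>Q) < ennreal \<eta>")
    case True
    have "ennreal c * emeasure Q (Pair \<theta> -` B) = (\<integral>\<^sup>+y. ennreal c * indicator (Pair \<theta> -` B) y \<partial>Q)"
      using sets_Pair1[OF B] by (simp add: nn_integral_cmult_indicator)
    also have "\<dots> \<le> (\<integral>\<^sup>+y. D (\<theta>, y) \<partial>Q)"
      by (rule nn_integral_mono) (auto simp: B_def indicator_def)
    also have "\<dots> < ennreal \<eta>" by fact
    finally have "ennreal (c * measure Q (Pair \<theta> -` B)) < ennreal \<eta>"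
      by (simp add: Q.emeasure_eq_measure ennreal_mult c less_imp_le)
    then have "c * measure Q (Pair \<theta> -` B) < \<eta>" by (metis ennreal_leI not_le)
    then have "measure Q (Pair \<theta> -` B) \<le> \<eta> / c" using c by (simp add: pos_le_divide_eq mult.commute)
    then show ?thesis by (simp add: Q.emeasure_eq_measure ennreal_leI)
  next
    case False
    then have "Pair \<theta> -` B = {}" by (auto simp: B_def)
    then show ?thesis by simp
  qed
  have "emeasure (P \<Otimes>\<^sub>M Q) B = (\<integral>\<^sup>+\<theta>. emeasure Q (Pair \<theta> -` B) \<partial>P)"
    by (rule Q.emeasure_pair_measure_alt[OF B])
  also have "\<dots> \<le> (\<integral>\<^sup>+\<theta>. ennreal (\<eta> / c) \<partial>P)" by (rule nn_integral_mono) (rule slice)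
  also have "\<dots> = ennreal (\<eta> / c)" using P.emeasure_space_1 by simp
  finally show ?thesis
    unfolding B_def[symmetric] measure_def by (rule enn2real_leI[rotated]) (use c \<eta> in simp)
qed

lemma (in prob_space) prob_many_events_le:
  fixes n :: nat
  assumes events: "\<And>i. {\<omega>\<in>space M. P i \<omega>} \<in> events"
    and bound: "\<And>i. i < n \<Longrightarrow> prob {\<omega>\<in>space M. P i \<omega>} \<le> r" and n: "n > 0" and t: "t > 0"
  shows "prob {\<omega>\<in>space M. real n * t \<le> real (card {i. i < n \<and> P i \<omega>})} \<le> r / t"
proof -
  define N where "N \<omega> = real (card {i. i < n \<and> P i \<omega>})" for \<omega>
  have N_meas[measurable]: "N \<in> borel_measurable M"
    unfolding N_def[abs_def] by (rule borel_measurable_card_filter_lessThan[OF events])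
  have N_eq: "N \<omega> = (\<Sum>i<n. indicator {\<omega>\<in>space M. P i \<omega>} \<omega>)" if "\<omega> \<in> space M" for \<omega>
    unfolding N_def by (subst card_filter_lessThan_eq_sum) (simp add: indicator_def that)
  have "expectation N = expectation (\<lambda>\<omega>. \<Sum>i<n. indicator {\<omega>\<in>space M. P i \<omega>} \<omega>)"
    by (rule Bochner_Integration.integral_cong[OF refl N_eq])
  also have "\<dots> = (\<Sum>i<n. expectation (indicator {\<omega>\<in>space M. P i \<omega>}))"
    by (rule Bochner_Integration.integral_sum)
      (auto intro!: integrable_real_indicator events simp: less_top[symmetric])
  also have "\<dots> = (\<Sum>i<n. prob {\<omega>\<in>space M. P i \<omega>})"
    by (simp add: Int_absorb2[OF Collect_restrict])
  also have "\<dots> \<le> (\<Sum>i<n. r)" by (rule sum_mono) (simp add: bound)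
  finally have EN: "expectation N \<le> real n * r" by simp
  have "integrable M N"
  proof (rule integrable_const_bound[where B = "real n"])
    have "card {i. i < n \<and> P i \<omega>} \<le> card {..<n}" for \<omega> by (rule card_mono) auto
    then show "AE \<omega> in M. norm (N \<omega>) \<le> real n" by (simp add: N_def)
  qed simp
  then have "prob {\<omega>\<in>space M. real n * t \<le> N \<omega>} \<le> expectation N / (real n * t)"
    by (rule integral_Markov_inequality_measure[OF _ sets.top]) (use n t in \<open>auto simp: N_def\<close>)
  also have "\<dots> \<le> real n * r / (real n * t)" using EN n t by (intro divide_right_mono) auto
  also have "\<dots> = r / t" using n by simp
  finally show ?thesis by (simp add: N_def)
qed

lemma exp_neg_linear_tendsto_0:
  assumes "c > 0" shows "(\<lambda>n. exp (- 2 * real n * c)) \<longlonglongrightarrow> 0"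
proof -
  have "(\<lambda>n. exp (- 2 * c) ^ n) \<longlonglongrightarrow> 0" by (rule LIMSEQ_power_zero) (use assms in simp)
  moreover have "exp (- 2 * real n * c) = exp (- 2 * c) ^ n" for n
    using exp_of_nat_mult[of n "- 2 * c"] by (simp add: mult_ac)
  ultimately show ?thesis by simp
qed

section \<open>The calibration setting\<close>

locale cdf_calibration =
  fixes M :: "'a measure" and SX :: "'x measure" and Z :: "nat \<Rightarrow> 'a \<Rightarrow> 'x \<times> real"
    and F :: "'x \<Rightarrow> real \<Rightarrow> real" and S :: "nat \<Rightarrow> 's measure" and \<Theta> :: "nat \<Rightarrow> 'a \<Rightarrow> 's"
    and G :: "nat \<Rightarrow> 's \<Rightarrow> 'x \<Rightarrow> real \<Rightarrow> real"
  assumes prob: "prob_space M"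
    and iid: "prob_space.indep_vars M (\<lambda>_. SX \<Otimes>\<^sub>M borel) Z UNIV"
    and ident: "\<forall>i. distr M (SX \<Otimes>\<^sub>M borel) (Z i) = distr M (SX \<Otimes>\<^sub>M borel) (Z 0)"
    and F_cdf: "\<forall>x\<in>space SX. is_cdf (F x)"
    and F_meas: "\<forall>y. (\<lambda>x. F x y) \<in> borel_measurable SX"
    and F_cond: "\<forall>A\<in>sets SX. \<forall>y. measure M {\<omega>\<in>space M. fst (Z 0 \<omega>) \<in> A \<and> snd (Z 0 \<omega>) \<le> y}
                   = (LINT x:A|distr M SX (\<lambda>\<omega>. fst (Z 0 \<omega>)). F x y)"
    and G_meas: "\<forall>n. (\<lambda>(\<theta>, x, y). G n \<theta> x y) \<in> borel_measurable (S n \<Otimes>\<^sub>M (SX \<Otimes>\<^sub>M borel))"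
    and G_cdf: "\<forall>n. \<forall>\<theta>\<in>space (S n). \<forall>x\<in>space SX. is_cdf (G n \<theta> x)"
    and \<Theta>_meas: "\<forall>n. \<Theta> n \<in> measurable M (S n)"
    and indep: "\<forall>n. prob_space.indep_set M (sets (vimage_algebra (space M) (\<Theta> n) (S n)))
                   (sets (vimage_algebra (space M) (\<lambda>\<omega>. \<lambda>i\<in>{..n}. Z i \<omega>)
                      (PiM {..n} (\<lambda>_. SX \<Otimes>\<^sub>M borel))))"
begin

sublocale prob_space M by (rule prob)

definition X :: "nat \<Rightarrow> 'a \<Rightarrow> 'x" where "X i \<omega> = fst (Z i \<omega>)"
definition Y :: "nat \<Rightarrow> 'a \<Rightarrow> real" where "Y i \<omega> = snd (Z i \<omega>)"
definition PX :: "'x measure" where "PX = distr M SX (X 0)"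
definition sup_sq_dev :: "nat \<Rightarrow> 's \<Rightarrow> 'x \<Rightarrow> ennreal"
  where "sup_sq_dev n \<theta> x = (SUP y. ennreal ((G n \<theta> x y - F x y)\<^sup>2))"
definition mean_sup_sq_dev :: "nat \<Rightarrow> 's \<Rightarrow> ennreal"
  where "mean_sup_sq_dev n \<theta> = (\<integral>\<^sup>+ x. sup_sq_dev n \<theta> x \<partial>PX)"

lemma Z_measurable[measurable]: "Z i \<in> measurable M (SX \<Otimes>\<^sub>M borel)"
  using iid unfolding indep_vars_def2 by auto

lemma X_measurable[measurable]: "X i \<in> measurable M SX"
  unfolding X_def[abs_def] by measurable

lemma Y_measurable[measurable]: "Y i \<in> borel_measurable M"
  unfolding Y_def[abs_def] by measurable

lemma \<Theta>_measurable[measurable]: "\<Theta> n \<in> measurable M (S n)"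
  using \<Theta>_meas by blast

lemma F_measurable[measurable]: "(\<lambda>x. F x y) \<in> borel_measurable SX"
  using F_meas by blast

lemma prob_space_PX: "prob_space PX"
  unfolding PX_def by (rule prob_space_distr) simp

lemma space_PX[simp]: "space PX = space SX" and sets_PX[simp, measurable_cong]: "sets PX = sets SX"
  by (simp_all add: PX_def)

lemma distr_X: "distr M SX (X j) = PX"
proof -
  have "distr M SX (X j) = distr (distr M (SX \<Otimes>\<^sub>M borel) (Z j)) SX fst"
    by (subst distr_distr) (auto simp: X_def[abs_def] comp_def)
  also have "\<dots> = distr (distr M (SX \<Otimes>\<^sub>M borel) (Z 0)) SX fst" using ident[rule_format, of j] by simp
  also have "\<dots> = PX"
    by (subst distr_distr) (auto simp: PX_def X_def[abs_def] comp_def)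
  finally show ?thesis .
qed

lemma prob_Int_\<Theta>_X_eq_prod:
  assumes j: "j \<le> n" and A: "A \<in> sets (S n)" and B: "B \<in> sets SX"
  shows "prob ((\<Theta> n -` A \<inter> space M) \<inter> (X j -` B \<inter> space M))
       = prob (\<Theta> n -` A \<inter> space M) * prob (X j -` B \<inter> space M)"
proof -
  define Zv where "Zv \<omega> = (\<lambda>i\<in>{..n}. Z i \<omega>)" for \<omega>
  have Zv_meas: "Zv \<in> measurable M (PiM {..n} (\<lambda>_. SX \<Otimes>\<^sub>M borel))"
    unfolding Zv_def[abs_def] by (rule measurable_restrict) simp
  have "j \<in> {..n}" using j by simp
  then have "(\<lambda>f. fst (f j)) \<in> measurable (PiM {..n} (\<lambda>_. SX \<Otimes>\<^sub>M borel)) SX"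
    by measurable
  define C :: "(nat \<Rightarrow> 'x \<times> real) set"
    where "C = (\<lambda>f. fst (f j)) -` B \<inter> space (PiM {..n} (\<lambda>_. SX \<Otimes>\<^sub>M borel))"
  have C: "C \<in> sets (PiM {..n} (\<lambda>_. SX \<Otimes>\<^sub>M borel))"
    unfolding C_def using \<open>(\<lambda>f. fst (f j)) \<in> _\<close> B by (rule measurable_sets)
  have "X j -` B \<inter> space M = Zv -` C \<inter> space M"
    using j measurable_space[OF Zv_meas] by (auto simp: C_def Zv_def X_def)
  then have "X j -` B \<inter> space M \<in> sets (vimage_algebra (space M) Zv (PiM {..n} (\<lambda>_. SX \<Otimes>\<^sub>M borel)))"
    using C measurable_space[OF Zv_meas] by (subst sets_vimage_algebra2) auto
  moreover have "\<Theta> n -` A \<inter> space M \<in> sets (vimage_algebra (space M) (\<Theta> n) (S n))"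
    using A measurable_space[OF \<Theta>_measurable] by (subst sets_vimage_algebra2) auto
  ultimately show ?thesis
    using indep unfolding Zv_def[abs_def] indep_sets2_eq by blast
qed

lemma distr_\<Theta>_X_eq_pair_measure:
  assumes j: "j \<le> n"
  shows "distr M (S n \<Otimes>\<^sub>M SX) (\<lambda>\<omega>. (\<Theta> n \<omega>, X j \<omega>)) = distr M (S n) (\<Theta> n) \<Otimes>\<^sub>M PX"
proof (rule pair_measure_eqI[symmetric])
  show "sigma_finite_measure (distr M (S n) (\<Theta> n))"
    by (rule prob_space_imp_sigma_finite, rule prob_space_distr) simp
  show "sigma_finite_measure PX" by (rule prob_space_imp_sigma_finite, rule prob_space_PX)
  show "sets (distr M (S n) (\<Theta> n) \<Otimes>\<^sub>M PX) = sets (distr M (S n \<Otimes>\<^sub>M SX) (\<lambda>\<omega>. (\<Theta> n \<omega>, X j \<omega>)))"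
    by (simp cong: sets_pair_measure_cong)
  fix A B assume "A \<in> sets (distr M (S n) (\<Theta> n))" and "B \<in> sets PX"
  then have A: "A \<in> sets (S n)" and B: "B \<in> sets SX" by auto
  have "emeasure (distr M (S n \<Otimes>\<^sub>M SX) (\<lambda>\<omega>. (\<Theta> n \<omega>, X j \<omega>))) (A \<times> B)
      = emeasure M ((\<Theta> n -` A \<inter> space M) \<inter> (X j -` B \<inter> space M))"
    using A B by (subst emeasure_distr) (auto intro!: arg_cong[where f="emeasure M"])
  also have "\<dots> = ennreal (prob (\<Theta> n -` A \<inter> space M) * prob (X j -` B \<inter> space M))"
    by (simp add: emeasure_eq_measure prob_Int_\<Theta>_X_eq_prod[OF j A B])
  also have "\<dots> = emeasure (distr M (S n) (\<Theta> n)) A * emeasure PX B"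
    using A B by (simp add: emeasure_distr emeasure_eq_measure ennreal_mult flip: distr_X[of j])
  finally show "emeasure (distr M (S n) (\<Theta> n)) A * emeasure PX B
      = emeasure (distr M (S n \<Otimes>\<^sub>M SX) (\<lambda>\<omega>. (\<Theta> n \<omega>, X j \<omega>))) (A \<times> B)" by simp
qed

lemma sup_sq_dev_eq_SUP_Rats:
  assumes "\<theta> \<in> space (S n)" "x \<in> space SX"
  shows "sup_sq_dev n \<theta> x = (SUP q\<in>\<rat>. ennreal ((G n \<theta> x q - F x q)\<^sup>2))"
  unfolding sup_sq_dev_def
proof (rule SUP_ennreal_eq_SUP_Rats)
  fix y
  have "continuous (at_right y) (G n \<theta> x)" "continuous (at_right y) (F x)"
    using G_cdf F_cdf assms by (auto simp: is_cdf_def)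
  then show "continuous (at_right y) (\<lambda>y. (G n \<theta> x y - F x y)\<^sup>2)"
    by (intro continuous_intros)
qed

lemma sup_sq_dev_measurable[measurable]:
  "(\<lambda>p. sup_sq_dev n (fst p) (snd p)) \<in> borel_measurable (S n \<Otimes>\<^sub>M SX)"
proof -
  have "(\<lambda>p. G n (fst p) (snd p) q) \<in> borel_measurable (S n \<Otimes>\<^sub>M SX)" for q
  proof -
    have "(\<lambda>p. (fst p, snd p, q)) \<in> measurable (S n \<Otimes>\<^sub>M SX) (S n \<Otimes>\<^sub>M (SX \<Otimes>\<^sub>M borel))"
      by measurable
    from measurable_compose[OF this G_meas[rule_format, of n]] show ?thesis by simp
  qed
  note [measurable] = this
  have "(\<lambda>p. SUP q\<in>\<rat>. ennreal ((G n (fst p) (snd p) q - F (snd p) q)\<^sup>2)) \<in> borel_measurable (S n \<Otimes>\<^sub>M SX)"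
    by (rule borel_measurable_SUP) (auto simp: countable_rat)
  then show ?thesis
    by (rule measurable_cong[THEN iffD1, rotated]) (auto simp: space_pair_measure sup_sq_dev_eq_SUP_Rats)
qed

lemma sup_sq_dev_comp_measurable[measurable]:
  "(\<lambda>\<omega>. sup_sq_dev n (\<Theta> n \<omega>) (X j \<omega>)) \<in> borel_measurable M"
  using measurable_compose[OF _ sup_sq_dev_measurable, of "\<lambda>\<omega>. (\<Theta> n \<omega>, X j \<omega>)" M n] by simp

lemma mean_sup_sq_dev_measurable[measurable]: "mean_sup_sq_dev n \<in> borel_measurable (S n)"
proof -
  interpret PX: prob_space PX by (rule prob_space_PX)
  have "(\<lambda>p. sup_sq_dev n (fst p) (snd p)) \<in> borel_measurable (S n \<Otimes>\<^sub>M PX)"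
    using sup_sq_dev_measurable by (simp cong: measurable_cong_sets sets_pair_measure_cong)
  from PX.borel_measurable_nn_integral_fst[OF this] show ?thesis
    by (simp add: mean_sup_sq_dev_def[abs_def])
qed

lemma abs_diff_lt_of_sup_sq_dev_lt:
  assumes "sup_sq_dev n \<theta> x < ennreal (r\<^sup>2)" "0 \<le> r"
  shows "\<bar>G n \<theta> x y - F x y\<bar> < r"
proof -
  have "ennreal ((G n \<theta> x y - F x y)\<^sup>2) \<le> sup_sq_dev n \<theta> x"
    unfolding sup_sq_dev_def by (rule SUP_upper) simp
  then have "ennreal ((G n \<theta> x y - F x y)\<^sup>2) < ennreal (r\<^sup>2)"
    using assms(1) by (rule order.strict_trans1)
  then have "\<bar>G n \<theta> x y - F x y\<bar>\<^sup>2 < r\<^sup>2" by (simp add: ennreal_less_iff)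
  then show ?thesis using assms(2) by (rule power_less_imp_less_base)
qed

lemma prob_sup_sq_dev_ge_le:
  assumes j: "j \<le> n" and c: "c > 0" and \<eta>: "\<eta> \<ge> 0"
  shows "prob {\<omega>\<in>space M. ennreal c \<le> sup_sq_dev n (\<Theta> n \<omega>) (X j \<omega>)}
     \<le> prob {\<omega>\<in>space M. ennreal \<eta> \<le> mean_sup_sq_dev n (\<Theta> n \<omega>)} + \<eta> / c"
proof -
  define P\<Theta> where "P\<Theta> = distr M (S n) (\<Theta> n)"
  have [simp]: "space P\<Theta> = space (S n)" and [measurable_cong, simp]: "sets P\<Theta> = sets (S n)"
    by (simp_all add: P\<Theta>_def)
  define B where "B = {p \<in> space (S n \<Otimes>\<^sub>M SX).
    ennreal c \<le> sup_sq_dev n (fst p) (snd p) \<and> mean_sup_sq_dev n (fst p) < ennreal \<eta>}"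
  have B: "B \<in> sets (S n \<Otimes>\<^sub>M SX)" unfolding B_def by measurable
  have pair: "measure (P\<Theta> \<Otimes>\<^sub>M PX) B \<le> \<eta> / c"
  proof -
    have "(\<lambda>p. sup_sq_dev n (fst p) (snd p)) \<in> borel_measurable (P\<Theta> \<Otimes>\<^sub>M PX)"
      by (simp cong: measurable_cong_sets sets_pair_measure_cong)
    moreover have "space (P\<Theta> \<Otimes>\<^sub>M PX) = space (S n \<Otimes>\<^sub>M SX)" by (simp add: space_pair_measure)
    moreover have "prob_space P\<Theta>" unfolding P\<Theta>_def by (rule prob_space_distr) simp
    ultimately show ?thesis
      using measure_pair_large_slice_le[OF _ prob_space_PX _ c \<eta>,
          of P\<Theta> "\<lambda>p. sup_sq_dev n (fst p) (snd p)"]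
      unfolding B_def mean_sup_sq_dev_def by simp
  qed
  have law: "measure (P\<Theta> \<Otimes>\<^sub>M PX) B = prob ((\<lambda>\<omega>. (\<Theta> n \<omega>, X j \<omega>)) -` B \<inter> space M)"
    using B by (simp add: P\<Theta>_def measure_distr flip: distr_\<Theta>_X_eq_pair_measure[OF j])
  have "{\<omega>\<in>space M. ennreal c \<le> sup_sq_dev n (\<Theta> n \<omega>) (X j \<omega>)}
      \<subseteq> {\<omega>\<in>space M. ennreal \<eta> \<le> mean_sup_sq_dev n (\<Theta> n \<omega>)} \<union> ((\<lambda>\<omega>. (\<Theta> n \<omega>, X j \<omega>)) -` B \<inter> space M)"
    using measurable_space[OF \<Theta>_measurable] measurable_space[OF X_measurable]
    by (auto simp: B_def space_pair_measure not_le)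
  then have "prob {\<omega>\<in>space M. ennreal c \<le> sup_sq_dev n (\<Theta> n \<omega>) (X j \<omega>)}
      \<le> prob ({\<omega>\<in>space M. ennreal \<eta> \<le> mean_sup_sq_dev n (\<Theta> n \<omega>)}
               \<union> ((\<lambda>\<omega>. (\<Theta> n \<omega>, X j \<omega>)) -` B \<inter> space M))"
    by (rule finite_measure_mono) (use B in measurable)
  also have "\<dots> \<le> prob {\<omega>\<in>space M. ennreal \<eta> \<le> mean_sup_sq_dev n (\<Theta> n \<omega>)}
      + prob ((\<lambda>\<omega>. (\<Theta> n \<omega>, X j \<omega>)) -` B \<inter> space M)"
    by (rule measure_Un_le) (use B in measurable)
  also have "\<dots> \<le> prob {\<omega>\<in>space M. ennreal \<eta> \<le> mean_sup_sq_dev n (\<Theta> n \<omega>)} + \<eta> / c"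
    using pair law by simp
  finally show ?thesis .
qed

lemma prob_many_large_sup_sq_dev_le:
  assumes n: "n > 0" and c: "c > 0" and \<eta>: "\<eta> \<ge> 0" and t: "t > 0"
  shows "prob {\<omega>\<in>space M. real n * t \<le> real (card {i. i < n \<and> ennreal c \<le> sup_sq_dev n (\<Theta> n \<omega>) (X i \<omega>)})}
    \<le> (prob {\<omega>\<in>space M. ennreal \<eta> \<le> mean_sup_sq_dev n (\<Theta> n \<omega>)} + \<eta> / c) / t"
  by (rule prob_many_events_le[OF _ prob_sup_sq_dev_ge_le[OF _ c \<eta>] n t]) measurable

lemma geninv_F_measurable[measurable]:
  assumes a: "0 < a" "a < 1"
  shows "(\<lambda>x. geninv (F x) a) \<in> borel_measurable SX"
proof (rule borel_measurable_iff_le[THEN iffD2], intro allI)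
  fix y
  have "{x \<in> space SX. geninv (F x) a \<le> y} = {x \<in> space SX. a \<le> F x y}"
    using geninv_le_iff[OF _ a] F_cdf by auto
  then show "{x \<in> space SX. geninv (F x) a \<le> y} \<in> sets SX" by (simp only:) measurable
qed

lemma prob_Y_le_geninv_F:
  assumes F_cont: "\<forall>x\<in>space SX. \<forall>y. isCont (F x) y" and a: "0 < a" "a < 1"
  shows "prob {\<omega>\<in>space M. Y j \<omega> \<le> geninv (F (X j \<omega>)) a} = a"
proof -
  interpret PX: prob_space PX by (rule prob_space_PX)
  define C where "C = {z \<in> space (SX \<Otimes>\<^sub>M borel). snd z \<le> geninv (F (fst z)) a}"
  have C: "C \<in> sets (SX \<Otimes>\<^sub>M borel)" unfolding C_def using a by measurable
  have Z_C: "{\<omega>\<in>space M. Y i \<omega> \<le> geninv (F (X i \<omega>)) a} = Z i -` C \<inter> space M" for i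
    using measurable_space[OF Z_measurable[of i]] by (auto simp: C_def X_def Y_def)
  have "prob {\<omega>\<in>space M. Y j \<omega> \<le> geninv (F (X j \<omega>)) a} = measure (distr M (SX \<Otimes>\<^sub>M borel) (Z j)) C"
    unfolding Z_C using C by (subst measure_distr) auto
  also have "\<dots> = measure (distr M (SX \<Otimes>\<^sub>M borel) (Z 0)) C" using ident[rule_format, of j] by simp
  also have "\<dots> = prob {\<omega>\<in>space M. Y 0 \<omega> \<le> geninv (F (X 0 \<omega>)) a}"
    unfolding Z_C using C by (subst measure_distr) auto
  also have "\<dots> = (\<integral>x. F x (geninv (F x) a) \<partial>PX)"
    unfolding PX_def
  proof (rule prob_le_comp_eq_integral[OF prob X_measurable Y_measurable _ F_measurable])
    show "\<forall>x\<in>space SX. \<forall>y. 0 \<le> F x y \<and> F x y \<le> 1" using F_cdf is_cdf_nonneg is_cdf_le_1 by blast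
    show "\<forall>A\<in>sets SX. \<forall>y. prob {\<omega> \<in> space M. X 0 \<omega> \<in> A \<and> Y 0 \<omega> \<le> y} = (LINT x:A|distr M SX (X 0). F x y)"
      using F_cond by (simp add: X_def[abs_def] Y_def[abs_def])
    show "\<forall>x\<in>space SX. \<forall>y. continuous (at_right y) (F x)" using F_cdf by (simp add: is_cdf_def)
  qed (use a in measurable)
  also have "\<dots> = (\<integral>x. a \<partial>PX)"
    using cdf_geninv_eq[OF _ a] F_cdf F_cont by (intro Bochner_Integration.integral_cong) auto
  also have "\<dots> = a" using PX.prob_space by simp
  finally show ?thesis .
qed

lemma card_below_geninv_F_deviation:
  assumes F_cont: "\<forall>x\<in>space SX. \<forall>y. isCont (F x) y" and a: "0 < a" "a < 1"
    and n: "n > 0" and \<epsilon>: "\<epsilon> \<ge> 0"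
  shows "prob {\<omega>\<in>space M. real (card {i. i < n \<and> Y i \<omega> \<le> geninv (F (X i \<omega>)) a}) \<le> real n * (a - \<epsilon>)}
           \<le> exp (- 2 * real n * \<epsilon>\<^sup>2)"
    and "prob {\<omega>\<in>space M. real n * (a + \<epsilon>) \<le> real (card {i. i < n \<and> Y i \<omega> \<le> geninv (F (X i \<omega>)) a})}
           \<le> exp (- 2 * real n * \<epsilon>\<^sup>2)"
proof -
  define g :: "'x \<times> real \<Rightarrow> real" where "g z = of_bool (snd z \<le> geninv (F (fst z)) a)" for z
  define I where "I i \<omega> = g (Z i \<omega>)" for i \<omega>
  have g[measurable]: "g \<in> borel_measurable (SX \<Otimes>\<^sub>M borel)" unfolding g_def using a by measurable
  have [measurable]: "I i \<in> borel_measurable M" for i unfolding I_def[abs_def] by measurable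
  interpret H: Hoeffding_ineq_iid M "{..<n}" I "I 0" 0 1 "expectation (I 0)"
  proof unfold_locales
    show "indep_vars (\<lambda>_. borel) I {..<n}"
      unfolding I_def[abs_def] using indep_vars_compose2[OF iid g] by (rule indep_vars_subset) auto
    show "distr M borel (I i) = distr M borel (I 0)" for i
    proof -
      have "distr M borel (I j) = distr (distr M (SX \<Otimes>\<^sub>M borel) (Z j)) borel g" for j
        unfolding I_def[abs_def] by (subst distr_distr) (auto simp: comp_def)
      then show ?thesis using ident[rule_format, of i] by simp
    qed
  qed (auto simp: I_def g_def)
  have "I 0 \<omega> = indicator {\<omega>\<in>space M. Y 0 \<omega> \<le> geninv (F (X 0 \<omega>)) a} \<omega>" if "\<omega> \<in> space M" for \<omega>
    using that by (simp add: I_def g_def X_def Y_def indicator_def)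
  then have "expectation (I 0) = expectation (indicator {\<omega>\<in>space M. Y 0 \<omega> \<le> geninv (F (X 0 \<omega>)) a})"
    by (rule Bochner_Integration.integral_cong[OF refl])
  also have "\<dots> = prob {\<omega>\<in>space M. Y 0 \<omega> \<le> geninv (F (X 0 \<omega>)) a}"
    by (simp add: Int_absorb2[OF Collect_restrict])
  also have "\<dots> = a" by (rule prob_Y_le_geninv_F[OF F_cont a])
  finally have mean: "expectation (I 0) = a" .
  have sum_I: "(\<Sum>i\<in>{..<n}. I i \<omega>) = real (card {i. i < n \<and> Y i \<omega> \<le> geninv (F (X i \<omega>)) a})" for \<omega>
    by (simp add: card_filter_lessThan_eq_sum I_def g_def X_def Y_def)
  have ne: "{..<n} \<noteq> {}" using n by auto
  show "prob {\<omega>\<in>space M. real (card {i. i < n \<and> Y i \<omega> \<le> geninv (F (X i \<omega>)) a}) \<le> real n * (a - \<epsilon>)}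
           \<le> exp (- 2 * real n * \<epsilon>\<^sup>2)"
    using H.Hoeffding_ineq_le'[OF \<epsilon> zero_less_one ne] n
    by (simp add: mean sum_I pos_divide_le_eq mult.commute)
  show "prob {\<omega>\<in>space M. real n * (a + \<epsilon>) \<le> real (card {i. i < n \<and> Y i \<omega> \<le> geninv (F (X i \<omega>)) a})}
           \<le> exp (- 2 * real n * \<epsilon>\<^sup>2)"
    using H.Hoeffding_ineq_ge'[OF \<epsilon> zero_less_one ne] n
    by (simp add: mean sum_I pos_le_divide_eq mult.commute)
qed

section \<open>Consistency of the calibrated quantiles\<close>

lemma card_large_sup_sq_dev_measurable[measurable]:
  "(\<lambda>\<omega>. real (card {i. i < n \<and> ennreal c \<le> sup_sq_dev n (\<Theta> n \<omega>) (X i \<omega>)})) \<in> borel_measurable M"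
  by (rule borel_measurable_card_filter_lessThan) measurable

lemma card_below_geninv_F_measurable[measurable]:
  assumes "0 < a" "a < 1"
  shows "(\<lambda>\<omega>. real (card {i. i < n \<and> Y i \<omega> \<le> geninv (F (X i \<omega>)) a})) \<in> borel_measurable M"
  by (rule borel_measurable_card_filter_lessThan) (use assms in measurable)

text \<open>The thresholds match the hypotheses of \<open>emp_quantile_perturb\<close> applied to the scores
  \<open>V i = F (X i) (Y i)\<close>.\<close>

definition bad_event :: "nat \<Rightarrow> real \<Rightarrow> real \<Rightarrow> 'a set" where
  "bad_event n \<beta> s =
     {\<omega>\<in>space M. ennreal (s\<^sup>2) \<le> sup_sq_dev n (\<Theta> n \<omega>) (X n \<omega>)}
   \<union> {\<omega>\<in>space M. real n * (s / 8)
        \<le> real (card {i. i < n \<and> ennreal ((s / 2)\<^sup>2) \<le> sup_sq_dev n (\<Theta> n \<omega>) (X i \<omega>)})}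
   \<union> {\<omega>\<in>space M. real (card {i. i < n \<and> Y i \<omega> \<le> geninv (F (X i \<omega>)) (\<beta> + s / 2)})
        \<le> real n * (\<beta> + s / 2 - s / 4)}
   \<union> {\<omega>\<in>space M. real n * (\<beta> - s / 4 + s / 8)
        \<le> real (card {i. i < n \<and> Y i \<omega> \<le> geninv (F (X i \<omega>)) (\<beta> - s / 4)})}"

lemma bad_event_in_events:
  assumes s: "0 < s" "s < \<beta>" "s < 1 - \<beta>"
  shows "bad_event n \<beta> s \<in> events"
proof -
  have "0 < \<beta> + s / 2" "\<beta> + s / 2 < 1" "0 < \<beta> - s / 4" "\<beta> - s / 4 < 1" using s by auto
  then show ?thesis unfolding bad_event_def by measurable
qed

lemma not_in_bad_event:
  assumes "\<omega> \<in> space M" "\<omega> \<notin> bad_event n \<beta> s"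
  shows "sup_sq_dev n (\<Theta> n \<omega>) (X n \<omega>) < ennreal (s\<^sup>2)"
    and "real (card {i. i < n \<and> ennreal ((s / 2)\<^sup>2) \<le> sup_sq_dev n (\<Theta> n \<omega>) (X i \<omega>)}) < real n * (s / 8)"
    and "real n * (\<beta> + s / 2 - s / 4) < real (card {i. i < n \<and> Y i \<omega> \<le> geninv (F (X i \<omega>)) (\<beta> + s / 2)})"
    and "real (card {i. i < n \<and> Y i \<omega> \<le> geninv (F (X i \<omega>)) (\<beta> - s / 4)}) < real n * (\<beta> - s / 4 + s / 8)"
  using assms by (auto simp: bad_event_def not_le)

lemma prob_bad_event_le:
  assumes F_cont: "\<forall>x\<in>space SX. \<forall>y. isCont (F x) y"
    and s: "0 < s" "s < \<beta>" "s < 1 - \<beta>" and n: "n > 0" and \<eta>: "\<eta> \<ge> 0"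
    and r: "prob {\<omega>\<in>space M. ennreal \<eta> \<le> mean_sup_sq_dev n (\<Theta> n \<omega>)} \<le> r"
  shows "prob (bad_event n \<beta> s) \<le> (r + \<eta> / s\<^sup>2) + (r + \<eta> / (s / 2)\<^sup>2) / (s / 8)
           + exp (- 2 * real n * (s / 4)\<^sup>2) + exp (- 2 * real n * (s / 8)\<^sup>2)"
proof -
  have a: "0 < \<beta> + s / 2" "\<beta> + s / 2 < 1" "0 < \<beta> - s / 4" "\<beta> - s / 4 < 1" using s by auto
  define B1 where "B1 = {\<omega>\<in>space M. ennreal (s\<^sup>2) \<le> sup_sq_dev n (\<Theta> n \<omega>) (X n \<omega>)}"
  define B2 where "B2 = {\<omega>\<in>space M. real n * (s / 8)
    \<le> real (card {i. i < n \<and> ennreal ((s / 2)\<^sup>2) \<le> sup_sq_dev n (\<Theta> n \<omega>) (X i \<omega>)})}"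
  define B3 where "B3 = {\<omega>\<in>space M.
    real (card {i. i < n \<and> Y i \<omega> \<le> geninv (F (X i \<omega>)) (\<beta> + s / 2)}) \<le> real n * (\<beta> + s / 2 - s / 4)}"
  define B4 where "B4 = {\<omega>\<in>space M.
    real n * (\<beta> - s / 4 + s / 8) \<le> real (card {i. i < n \<and> Y i \<omega> \<le> geninv (F (X i \<omega>)) (\<beta> - s / 4)})}"
  have B: "B1 \<in> events" "B2 \<in> events" "B3 \<in> events" "B4 \<in> events"
    unfolding B1_def B2_def B3_def B4_def using a by measurable
  have "prob (bad_event n \<beta> s) = prob (B1 \<union> B2 \<union> B3 \<union> B4)"
    by (simp add: bad_event_def B1_def B2_def B3_def B4_def)
  also have "\<dots> \<le> prob B1 + prob B2 + prob B3 + prob B4"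
    using measure_Un_le[of "B1 \<union> B2 \<union> B3" M B4] measure_Un_le[of "B1 \<union> B2" M B3]
      measure_Un_le[of B1 M B2] B by auto
  also have "\<dots> \<le> (r + \<eta> / s\<^sup>2) + (r + \<eta> / (s / 2)\<^sup>2) / (s / 8)
       + exp (- 2 * real n * (s / 4)\<^sup>2) + exp (- 2 * real n * (s / 8)\<^sup>2)"
  proof (intro add_mono)
    show "prob B1 \<le> r + \<eta> / s\<^sup>2"
      using prob_sup_sq_dev_ge_le[OF order.refl _ \<eta>, of "s\<^sup>2" n] r s by (simp add: B1_def)
    have "prob B2 \<le> (prob {\<omega>\<in>space M. ennreal \<eta> \<le> mean_sup_sq_dev n (\<Theta> n \<omega>)} + \<eta> / (s / 2)\<^sup>2) / (s / 8)"
      unfolding B2_def using s by (intro prob_many_large_sup_sq_dev_le[OF n _ \<eta>]) auto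
    also have "\<dots> \<le> (r + \<eta> / (s / 2)\<^sup>2) / (s / 8)" using r s by (intro divide_right_mono) auto
    finally show "prob B2 \<le> (r + \<eta> / (s / 2)\<^sup>2) / (s / 8)" .
    show "prob B3 \<le> exp (- 2 * real n * (s / 4)\<^sup>2)"
      unfolding B3_def using card_below_geninv_F_deviation(1)[OF F_cont a(1,2) n, of "s / 4"] s by simp
    show "prob B4 \<le> exp (- 2 * real n * (s / 8)\<^sup>2)"
      unfolding B4_def using card_below_geninv_F_deviation(2)[OF F_cont a(3,4) n, of "s / 8"] s by simp
  qed
  finally show ?thesis .
qed

lemma emp_quantile_scores_close:
  assumes F_cont: "\<forall>x\<in>space SX. \<forall>y. isCont (F x) y"
    and \<beta>: "0 < \<beta>" and s: "0 < s" "s < \<beta>" "s < 1 - \<beta>"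
    and n: "n > 0" and \<omega>: "\<omega> \<in> space M" and good: "\<omega> \<notin> bad_event n \<beta> s"
  shows "\<bar>emp_quantile (\<lambda>i. G n (\<Theta> n \<omega>) (X i \<omega>) (Y i \<omega>)) n \<beta> - \<beta>\<bar> \<le> s"
proof (rule emp_quantile_perturb[where V = "\<lambda>i. F (X i \<omega>) (Y i \<omega>)"
      and bad = "\<lambda>i. ennreal ((s / 2)\<^sup>2) \<le> sup_sq_dev n (\<Theta> n \<omega>) (X i \<omega>)", OF n s(1) \<beta>])
  have x: "X i \<omega> \<in> space SX" for i using measurable_space[OF X_measurable \<omega>] .
  have F: "is_cdf (F (X i \<omega>))" for i using F_cdf x by blast
  have F_geninv: "F (X i \<omega>) (geninv (F (X i \<omega>)) a) = a" if "0 < a" "a < 1" for i a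
    using cdf_geninv_eq[OF F that] F_cont x by blast
  show "\<bar>G n (\<Theta> n \<omega>) (X i \<omega>) (Y i \<omega>) - F (X i \<omega>) (Y i \<omega>)\<bar> < s / 2"
    if "\<not> ennreal ((s / 2)\<^sup>2) \<le> sup_sq_dev n (\<Theta> n \<omega>) (X i \<omega>)" for i
    using abs_diff_lt_of_sup_sq_dev_lt[of n "\<Theta> n \<omega>" "X i \<omega>" "s / 2"] that s by (simp add: not_le)
  show "real (card {i. i < n \<and> ennreal ((s / 2)\<^sup>2) \<le> sup_sq_dev n (\<Theta> n \<omega>) (X i \<omega>)}) < real n * s / 8"
    using not_in_bad_event(2)[OF \<omega> good] by simp
  have "real (card {i. i < n \<and> Y i \<omega> \<le> geninv (F (X i \<omega>)) (\<beta> + s / 2)})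
      \<le> real (card {i. i < n \<and> F (X i \<omega>) (Y i \<omega>) \<le> \<beta> + s / 2})"
  proof (rule card_filter_lessThan_mono)
    fix i assume "Y i \<omega> \<le> geninv (F (X i \<omega>)) (\<beta> + s / 2)"
    then have "F (X i \<omega>) (Y i \<omega>) \<le> F (X i \<omega>) (geninv (F (X i \<omega>)) (\<beta> + s / 2))"
      using F[of i] by (simp add: is_cdf_def mono_def)
    then show "F (X i \<omega>) (Y i \<omega>) \<le> \<beta> + s / 2" using F_geninv[of "\<beta> + s / 2" i] s by simp
  qed
  then show "real n * (\<beta> + s / 4) < real (card {i. i < n \<and> F (X i \<omega>) (Y i \<omega>) \<le> \<beta> + s / 2})"
    using not_in_bad_event(3)[OF \<omega> good] by argo
  have "real (card {i. i < n \<and> F (X i \<omega>) (Y i \<omega>) < \<beta> - s / 4})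
      \<le> real (card {i. i < n \<and> Y i \<omega> \<le> geninv (F (X i \<omega>)) (\<beta> - s / 4)})"
  proof (rule card_filter_lessThan_mono)
    fix i assume "F (X i \<omega>) (Y i \<omega>) < \<beta> - s / 4"
    then show "Y i \<omega> \<le> geninv (F (X i \<omega>)) (\<beta> - s / 4)"
      using geninv_le_iff[OF F, of "\<beta> - s / 4" i "Y i \<omega>"] s by auto
  qed
  then show "real (card {i. i < n \<and> F (X i \<omega>) (Y i \<omega>) < \<beta> - s / 4}) < real n * (\<beta> - s / 8)"
    using not_in_bad_event(4)[OF \<omega> good] by argo
qed

lemma quantile_error_le:
  assumes F_diff: "\<forall>x\<in>space SX. \<forall>y. F x differentiable (at y)" and K: "K > 0"
    and slope: "\<forall>x\<in>space SX. \<forall>y. \<bar>y - geninv (F x) \<beta>\<bar> < \<delta> \<longrightarrow> 1 / K \<le> deriv (F x) y"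
    and \<beta>: "0 < \<beta>" "\<beta> < 1" and e: "0 < e" "e < \<delta>"
    and s: "0 < s" "2 * s < e / K" "s < \<beta>" "s < 1 - \<beta>"
    and n: "n > 0" and \<omega>: "\<omega> \<in> space M" and good: "\<omega> \<notin> bad_event n \<beta> s"
  shows "\<bar>geninv (G n (\<Theta> n \<omega>) (X n \<omega>)) (emp_quantile (\<lambda>i. G n (\<Theta> n \<omega>) (X i \<omega>) (Y i \<omega>)) n \<beta>)
           - geninv (F (X n \<omega>)) \<beta>\<bar> \<le> e"
proof (rule geninv_perturb)
  have x: "X n \<omega> \<in> space SX" using measurable_space[OF X_measurable \<omega>] .
  show "is_cdf (F (X n \<omega>))" using F_cdf x by blast
  show "is_cdf (G n (\<Theta> n \<omega>) (X n \<omega>))" using G_cdf x measurable_space[OF \<Theta>_measurable \<omega>] by blast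
  show "\<forall>y. F (X n \<omega>) differentiable (at y)" using F_diff x by blast
  show "\<forall>y. \<bar>y - geninv (F (X n \<omega>)) \<beta>\<bar> < \<delta> \<longrightarrow> 1 / K \<le> deriv (F (X n \<omega>)) y" using slope x by blast
  show "\<forall>y. \<bar>G n (\<Theta> n \<omega>) (X n \<omega>) y - F (X n \<omega>) y\<bar> \<le> s"
    using abs_diff_lt_of_sup_sq_dev_lt[OF not_in_bad_event(1)[OF \<omega> good]] s by (simp add: less_imp_le)
  have "\<forall>x\<in>space SX. \<forall>y. isCont (F x) y" using F_diff differentiable_imp_continuous_within by blast
  then show "\<bar>emp_quantile (\<lambda>i. G n (\<Theta> n \<omega>) (X i \<omega>) (Y i \<omega>)) n \<beta> - \<beta>\<bar> \<le> s"
    by (rule emp_quantile_scores_close[OF _ \<beta>(1) s(1,3,4) n \<omega> good])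
  then show "0 < emp_quantile (\<lambda>i. G n (\<Theta> n \<omega>) (X i \<omega>) (Y i \<omega>)) n \<beta>"
    "emp_quantile (\<lambda>i. G n (\<Theta> n \<omega>) (X i \<omega>) (Y i \<omega>)) n \<beta> < 1"
    using s by auto
qed (use \<beta> e s in auto)

lemma outer_prob_quantile_error_le:
  assumes F_diff: "\<forall>x\<in>space SX. \<forall>y. F x differentiable (at y)" and K: "K > 0"
    and slope: "\<forall>x\<in>space SX. \<forall>y. \<bar>y - geninv (F x) \<beta>\<bar> < \<delta> \<longrightarrow> 1 / K \<le> deriv (F x) y"
    and \<beta>: "0 < \<beta>" "\<beta> < 1" and e: "0 < e" "e < \<delta>" "e \<le> \<epsilon>"
    and s: "0 < s" "2 * s < e / K" "s < \<beta>" "s < 1 - \<beta>" and n: "n > 0"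
  shows "outer_prob M {\<omega>\<in>space M. \<epsilon> < \<bar>geninv (G n (\<Theta> n \<omega>) (X n \<omega>))
           (emp_quantile (\<lambda>i. G n (\<Theta> n \<omega>) (X i \<omega>) (Y i \<omega>)) n \<beta>) - geninv (F (X n \<omega>)) \<beta>\<bar>}
         \<le> prob (bad_event n \<beta> s)"
proof (rule outer_prob_le_measure[OF finite_measure_axioms bad_event_in_events[OF s(1,3,4)]])
  show "{\<omega>\<in>space M. \<epsilon> < \<bar>geninv (G n (\<Theta> n \<omega>) (X n \<omega>))
           (emp_quantile (\<lambda>i. G n (\<Theta> n \<omega>) (X i \<omega>) (Y i \<omega>)) n \<beta>) - geninv (F (X n \<omega>)) \<beta>\<bar>}
        \<subseteq> bad_event n \<beta> s"
  proof
    fix \<omega> assume \<omega>: "\<omega> \<in> {\<omega>\<in>space M. \<epsilon> < \<bar>geninv (G n (\<Theta> n \<omega>) (X n \<omega>))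
           (emp_quantile (\<lambda>i. G n (\<Theta> n \<omega>) (X i \<omega>) (Y i \<omega>)) n \<beta>) - geninv (F (X n \<omega>)) \<beta>\<bar>}"
    show "\<omega> \<in> bad_event n \<beta> s"
    proof (rule ccontr)
      assume "\<omega> \<notin> bad_event n \<beta> s"
      from quantile_error_le[OF F_diff K slope \<beta> e(1,2) s n _ this] \<omega> e(3) show False by auto
    qed
  qed
qed


lemma quantile_error_tendsto_0:
  assumes F_diff: "\<forall>x\<in>space SX. \<forall>y. F x differentiable (at y)" and K: "K > 0" and \<delta>: "\<delta> > 0"
    and slope: "\<forall>x\<in>space SX. \<forall>y. \<bar>y - geninv (F x) \<beta>\<bar> < \<delta> \<longrightarrow> 1 / K \<le> deriv (F x) y"
    and \<beta>: "0 < \<beta>" "\<beta> < 1" and \<eta>: "\<eta> \<longlonglongrightarrow> 0" and \<rho>: "\<rho> \<longlonglongrightarrow> 0"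
    and rate: "\<forall>n. outer_prob M {\<omega>\<in>space M. ennreal (\<eta> n) \<le> mean_sup_sq_dev n (\<Theta> n \<omega>)} \<le> \<rho> n"
    and \<epsilon>: "\<epsilon> > 0"
  shows "(\<lambda>n. outer_prob M {\<omega>\<in>space M. \<epsilon> < \<bar>geninv (G n (\<Theta> n \<omega>) (X n \<omega>))
           (emp_quantile (\<lambda>i. G n (\<Theta> n \<omega>) (X i \<omega>) (Y i \<omega>)) n \<beta>) - geninv (F (X n \<omega>)) \<beta>\<bar>}) \<longlonglongrightarrow> 0"
    (is "(\<lambda>n. outer_prob M (?far n)) \<longlonglongrightarrow> 0")
proof -
  have F_cont: "\<forall>x\<in>space SX. \<forall>y. isCont (F x) y"
    using F_diff differentiable_imp_continuous_within by blast
  define e where "e = min \<epsilon> (\<delta> / 2)"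
  define s where "s = min (e / K) (min \<beta> (1 - \<beta>)) / 4"
  have e: "0 < e" "e < \<delta>" "e \<le> \<epsilon>" using \<epsilon> \<delta> by (auto simp: e_def)
  have "0 < min (e / K) (min \<beta> (1 - \<beta>))" "min (e / K) (min \<beta> (1 - \<beta>)) \<le> e / K"
    "min (e / K) (min \<beta> (1 - \<beta>)) \<le> \<beta>" "min (e / K) (min \<beta> (1 - \<beta>)) \<le> 1 - \<beta>"
    using e K \<beta> by auto
  then have s: "0 < s" "2 * s < e / K" "s < \<beta>" "s < 1 - \<beta>" unfolding s_def by linarith+
  define \<eta>' where "\<eta>' n = max 0 (\<eta> n)" for n
  have \<eta>'_lim: "\<eta>' \<longlonglongrightarrow> 0" using tendsto_max[OF tendsto_const \<eta>, of 0] by (simp add: \<eta>'_def[abs_def])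
  have \<eta>'_rate: "prob {\<omega>\<in>space M. ennreal (\<eta>' n) \<le> mean_sup_sq_dev n (\<Theta> n \<omega>)} \<le> \<rho> n" for n
  proof -
    have "ennreal (\<eta>' n) = ennreal (\<eta> n)" by (simp add: \<eta>'_def max_def ennreal_neg)
    moreover have "{\<omega>\<in>space M. ennreal (\<eta> n) \<le> mean_sup_sq_dev n (\<Theta> n \<omega>)} \<in> events" by measurable
    ultimately show ?thesis using rate outer_prob_eq_measure[OF finite_measure_axioms] by metis
  qed
  define bound where "bound n = (\<rho> n + \<eta>' n / s\<^sup>2) + (\<rho> n + \<eta>' n / (s / 2)\<^sup>2) / (s / 8)
      + exp (- 2 * real n * (s / 4)\<^sup>2) + exp (- 2 * real n * (s / 8)\<^sup>2)" for n
  have "bound \<longlonglongrightarrow> (0 + 0 / s\<^sup>2) + (0 + 0 / (s / 2)\<^sup>2) / (s / 8) + 0 + 0"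
    unfolding bound_def[abs_def] using s
    by (intro tendsto_intros \<rho> \<eta>'_lim exp_neg_linear_tendsto_0) auto
  then have bound_lim: "bound \<longlonglongrightarrow> 0" by simp
  have bound_ge: "outer_prob M (?far n) \<le> bound n" if n: "n > 0" for n
  proof -
    have "outer_prob M (?far n) \<le> prob (bad_event n \<beta> s)"
      by (rule outer_prob_quantile_error_le[OF F_diff K slope \<beta> e s n])
    also have "\<dots> \<le> bound n"
      unfolding bound_def by (rule prob_bad_event_le[OF F_cont s(1,3,4) n _ \<eta>'_rate]) (simp add: \<eta>'_def)
    finally show ?thesis .
  qed
  have bound_ev: "\<forall>\<^sub>F n in sequentially. outer_prob M (?far n) \<le> bound n"
    using eventually_gt_at_top[of 0] by (rule eventually_mono) (rule bound_ge)
  show ?thesis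
    by (rule tendsto_sandwich[OF _ bound_ev tendsto_const bound_lim])
      (intro always_eventually allI outer_prob_nonneg, auto)
qed

end

theorem lemma3:
  fixes M :: "'a measure" and SX :: "'x measure" and Z :: "nat \<Rightarrow> 'a \<Rightarrow> 'x \<times> real"
    and F :: "'x \<Rightarrow> real \<Rightarrow> real" and S :: "nat \<Rightarrow> 's measure" and \<Theta> :: "nat \<Rightarrow> 'a \<Rightarrow> 's"
    and G :: "nat \<Rightarrow> 's \<Rightarrow> 'x \<Rightarrow> real \<Rightarrow> real" and \<alpha> :: real
  assumes prob: "prob_space M"
    and iid: "prob_space.indep_vars M (\<lambda>_. SX \<Otimes>\<^sub>M borel) Z UNIV"
    and ident: "\<forall>i. distr M (SX \<Otimes>\<^sub>M borel) (Z i) = distr M (SX \<Otimes>\<^sub>M borel) (Z 0)"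
    and F_cdf: "\<forall>x\<in>space SX. is_cdf (F x)"
    and F_meas: "\<forall>y. (\<lambda>x. F x y) \<in> borel_measurable SX"
    and F_cond: "\<forall>A\<in>sets SX. \<forall>y. measure M {\<omega>\<in>space M. fst (Z 0 \<omega>) \<in> A \<and> snd (Z 0 \<omega>) \<le> y}
                   = (LINT x:A|distr M SX (\<lambda>\<omega>. fst (Z 0 \<omega>)). F x y)"
    and G_meas: "\<forall>n. (\<lambda>(\<theta>, x, y). G n \<theta> x y) \<in> borel_measurable (S n \<Otimes>\<^sub>M (SX \<Otimes>\<^sub>M borel))"
    and G_cdf: "\<forall>n. \<forall>\<theta>\<in>space (S n). \<forall>x\<in>space SX. is_cdf (G n \<theta> x)"
    and \<Theta>_meas: "\<forall>n. \<Theta> n \<in> measurable M (S n)"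
    and indep: "\<forall>n. prob_space.indep_set M (sets (vimage_algebra (space M) (\<Theta> n) (S n)))
                   (sets (vimage_algebra (space M) (\<lambda>\<omega>. \<lambda>i\<in>{..n}. Z i \<omega>)
                      (PiM {..n} (\<lambda>_. SX \<Otimes>\<^sub>M borel))))"
    and \<alpha>: "0 < \<alpha>" "\<alpha> < 1"
    and A1: "\<exists>\<eta> \<rho> :: nat \<Rightarrow> real. \<eta> \<longlonglongrightarrow> 0 \<and> \<rho> \<longlonglongrightarrow> 0 \<and>
              (\<forall>n. outer_prob M {\<omega>\<in>space M. ennreal (\<eta> n) \<le>
                   (\<integral>\<^sup>+ x. (SUP y. ennreal ((G n (\<Theta> n \<omega>) x y - F x y)\<^sup>2))
                      \<partial>(distr M SX (\<lambda>\<omega>. fst (Z 0 \<omega>))))} \<le> \<rho> n)"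
    and A2: "(\<forall>x\<in>space SX. \<forall>y. F x differentiable (at y)) \<and>
             (\<exists>K>0. \<exists>\<delta>>0. \<forall>x\<in>space SX. \<forall>y.
                (\<bar>y - geninv (F x) (\<alpha>/2)\<bar> < \<delta> \<or> \<bar>y - geninv (F x) (1 - \<alpha>/2)\<bar> < \<delta>)
                \<longrightarrow> deriv (F x) y \<ge> 1 / K)"
  shows "(\<forall>\<epsilon>>0. (\<lambda>n. outer_prob M {\<omega>\<in>space M.
            \<bar>geninv (G n (\<Theta> n \<omega>) (fst (Z n \<omega>)))
                (emp_quantile (\<lambda>i. G n (\<Theta> n \<omega>) (fst (Z i \<omega>)) (snd (Z i \<omega>))) n (\<alpha>/2))
             - geninv (F (fst (Z n \<omega>))) (\<alpha>/2)\<bar> > \<epsilon>}) \<longlonglongrightarrow> 0) \<and>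
         (\<forall>\<epsilon>>0. (\<lambda>n. outer_prob M {\<omega>\<in>space M.
            \<bar>geninv (G n (\<Theta> n \<omega>) (fst (Z n \<omega>)))
                (emp_quantile (\<lambda>i. G n (\<Theta> n \<omega>) (fst (Z i \<omega>)) (snd (Z i \<omega>))) n (1 - \<alpha>/2))
             - geninv (F (fst (Z n \<omega>))) (1 - \<alpha>/2)\<bar> > \<epsilon>}) \<longlonglongrightarrow> 0)"
proof -
  interpret cdf_calibration M SX Z F S \<Theta> G
    by (rule cdf_calibration.intro) (fact prob iid ident F_cdf F_meas F_cond G_meas G_cdf \<Theta>_meas indep)+
  obtain \<eta> \<rho> :: "nat \<Rightarrow> real" where \<eta>: "\<eta> \<longlonglongrightarrow> 0" and \<rho>: "\<rho> \<longlonglongrightarrow> 0"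
    and rate: "\<forall>n. outer_prob M {\<omega>\<in>space M. ennreal (\<eta> n) \<le> mean_sup_sq_dev n (\<Theta> n \<omega>)} \<le> \<rho> n"
    using A1 by (auto simp: mean_sup_sq_dev_def sup_sq_dev_def PX_def X_def[abs_def])
  obtain K \<delta> where K: "K > 0" and \<delta>: "\<delta> > 0" and slope: "\<forall>x\<in>space SX. \<forall>y.
      (\<bar>y - geninv (F x) (\<alpha>/2)\<bar> < \<delta> \<or> \<bar>y - geninv (F x) (1 - \<alpha>/2)\<bar> < \<delta>) \<longrightarrow> 1 / K \<le> deriv (F x) y"
    using A2 by blast
  have F_diff: "\<forall>x\<in>space SX. \<forall>y. F x differentiable (at y)" using A2 by blast
  have "\<forall>x\<in>space SX. \<forall>y. \<bar>y - geninv (F x) (\<alpha>/2)\<bar> < \<delta> \<longrightarrow> 1 / K \<le> deriv (F x) y"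
    and "\<forall>x\<in>space SX. \<forall>y. \<bar>y - geninv (F x) (1 - \<alpha>/2)\<bar> < \<delta> \<longrightarrow> 1 / K \<le> deriv (F x) y"
    using slope by blast+
  from this[THEN quantile_error_tendsto_0[OF F_diff K \<delta>], OF _ _ \<eta> \<rho> rate] \<alpha> show ?thesis
    by (simp add: X_def Y_def)
qed

end
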